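(* Let $k$ be a positive integer and let $f$ be the timelike minimal surface, defined on a neighbourhood of the origin in the $(u,v)$-plane, with real Weierstrass data $(g_1,g_2,\hat\omega_1du,\hat\omega_2dv)$ where $g_1=g_1(u)$ is a real-valued smooth function, $\hat\omega_1=\hat\omega_1(u)$ is smooth with $\hat{\omega}_1(0)\neq0$, $g_2(v)=v^{2k-1}$ and $\hat{\omega}_2(v)=v$. Then $f$ has $(2,2k+1)$-cuspidal edges along $v=0$: at each point $(u_0,0)$ with $\hat\omega_1(u_0)\ne0$ (in particular at every point of $\{v=0\}$ sufficiently near the origin), $f$ is $\mathcal{A}$-equivalent to the $(2,2k+1)$-cuspidal edge.
   Context: $\mathbb{L}^3$ is $\mathbb{R}^3$ with the Lorentzian metric $-dt^2+dx^2+dy^2$. The surface with real Weierstrass data $(g_1,g_2,\hat\omega_1du,\hat\omega_2dv)$ is $f(u,v)=\tfrac12\int_{0}^u(-1-g_1^2,1-g_1^2,2g_1)\hat{\omega}_1du+\tfrac12\int_{0}^v(1+g_2^2,1-g_2^2,-2g_2)\hat{\omega}_2dv$ (up to translation). $\mathcal{A}$-equivalence means equality of map germs up to diffeomorphism germs of source and target. The $(2,2k+1)$-cuspidal edge is the germ at $0$ of $(u,v)\mapsto(u,v^2,v^{2k+1})$. *)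

theory Defs
  imports "HOL-Analysis.Analysis"
begin

fun Cn_on :: "nat \<Rightarrow> 'a::euclidean_space set \<Rightarrow> ('a \<Rightarrow> 'b::euclidean_space) \<Rightarrow> bool" where
  "Cn_on 0 S f = continuous_on S f"
| "Cn_on (Suc n) S f =
     (\<exists>f'. (\<forall>x\<in>S. (f has_derivative f' x) (at x)) \<and> (\<forall>v. Cn_on n S (\<lambda>x. f' x v)))"

definition smooth_on :: "'a::euclidean_space set \<Rightarrow> ('a \<Rightarrow> 'b::euclidean_space) \<Rightarrow> bool" where
  "smooth_on S f \<longleftrightarrow> (\<forall>n. Cn_on n S f)"

definition diffeo_between :: "'a::euclidean_space set \<Rightarrow> 'a set \<Rightarrow> ('a \<Rightarrow> 'a) \<Rightarrow> bool" where
  "diffeo_between U V \<phi> \<longleftrightarrow> open U \<and> open V \<and> smooth_on U \<phi> \<and> \<phi> ` U = V \<and>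
     (\<exists>\<psi>. smooth_on V \<psi> \<and> \<psi> ` V = U \<and> (\<forall>x\<in>U. \<psi> (\<phi> x) = x) \<and> (\<forall>y\<in>V. \<phi> (\<psi> y) = y))"

definition A_equivalent ::
  "('a::euclidean_space \<Rightarrow> 'b::euclidean_space) \<Rightarrow> 'a \<Rightarrow> ('a \<Rightarrow> 'b) \<Rightarrow> 'a \<Rightarrow> bool" where
  "A_equivalent f p g q \<longleftrightarrow>
     (\<exists>U U' \<phi> W W' \<psi>. p \<in> U \<and> diffeo_between U U' \<phi> \<and> \<phi> p = q \<and>
        f p \<in> W \<and> diffeo_between W W' \<psi> \<and> \<psi> (f p) = g q \<and>
        (\<forall>x\<in>U. f x \<in> W \<and> \<psi> (f x) = g (\<phi> x)))"

definition oint :: "real \<Rightarrow> real \<Rightarrow> (real \<Rightarrow> 'a::euclidean_space) \<Rightarrow> 'a" where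
  "oint a b h = (if a \<le> b then integral {a..b} h else - integral {b..a} h)"

text \<open>Timelike minimal surface in L^3 (coordinates (t,x,y)) with real Weierstrass data
  (g1, g2, w1 du, w2 dv).\<close>
definition wsurf :: "(real \<Rightarrow> real) \<Rightarrow> (real \<Rightarrow> real) \<Rightarrow> (real \<Rightarrow> real) \<Rightarrow> (real \<Rightarrow> real)
    \<Rightarrow> real \<times> real \<Rightarrow> real \<times> real \<times> real" where
  "wsurf g1 w1 g2 w2 = (\<lambda>(u, v).
      (1/2) *\<^sub>R oint 0 u (\<lambda>s. w1 s *\<^sub>R (- 1 - (g1 s)\<^sup>2, 1 - (g1 s)\<^sup>2, 2 * g1 s))
    + (1/2) *\<^sub>R oint 0 v (\<lambda>t. w2 t *\<^sub>R (1 + (g2 t)\<^sup>2, 1 - (g2 t)\<^sup>2, - 2 * g2 t)))"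

definition cuspidal_edge :: "nat \<Rightarrow> real \<times> real \<Rightarrow> real \<times> real \<times> real" where
  "cuspidal_edge k = (\<lambda>(u, v). (u, v ^ 2, v ^ (2 * k + 1)))"

end

theory Submission
  imports Defs
begin

(* Integrating the v-part of the Weierstrass data explicitly gives f = Theta o c, where
   c (u, v) = (u, v^2, v^(2k+1)) is the cuspidal edge and Theta = cusp_chart k g1 w1 is
   Theta (u, q, r) = gamma u + (q/4 + q^(2k)/(8k), q/4 - q^(2k)/(8k), - r/(2k+1)),
   gamma being the u-part of f.  The Jacobian determinant of Theta at (u0, 0, 0) is
   w1 u0 / (4 (2k+1)) <> 0 and the inverse Jacobian is given by explicit formulas smooth in
   (u, q, r), so by the inverse function theorem Theta restricts to a diffeomorphism near
   (u0, 0, 0).  Since c commutes with translations in u, the inverse of Theta followed by a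
   translation, together with the translation (u, v) -> (u - u0, v) of the source, realise
   the A-equivalence. *)

lemma Cn_on_SucI:
  assumes "\<And>x. x \<in> S \<Longrightarrow> (f has_derivative f' x) (at x)"
    and "\<And>v. Cn_on n S (\<lambda>x. f' x v)"
  shows "Cn_on (Suc n) S f"
  using assms by auto

lemma Cn_on_SucE:
  assumes "Cn_on (Suc n) S f"
  obtains f' where "\<And>x. x \<in> S \<Longrightarrow> (f has_derivative f' x) (at x)"
    and "\<And>v. Cn_on n S (\<lambda>x. f' x v)"
  using assms by auto

lemma Cn_on_Suc_imp: "Cn_on (Suc n) S f \<Longrightarrow> Cn_on n S f"
proof (induction n arbitrary: f)
  case 0
  then obtain f' where "\<And>x. x \<in> S \<Longrightarrow> (f has_derivative f' x) (at x)"
    by (elim Cn_on_SucE) blast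
  then show ?case
    by (auto intro!: continuous_at_imp_continuous_on has_derivative_continuous)
next
  case (Suc n)
  from Suc.prems obtain f' where "\<And>x. x \<in> S \<Longrightarrow> (f has_derivative f' x) (at x)"
    and "\<And>v. Cn_on (Suc n) S (\<lambda>x. f' x v)" by (elim Cn_on_SucE) blast
  with Suc.IH show ?case by (blast intro: Cn_on_SucI)
qed

lemma Cn_on_subset: "Cn_on n S f \<Longrightarrow> T \<subseteq> S \<Longrightarrow> Cn_on n T f"
proof (induction n arbitrary: f)
  case 0
  then show ?case by (auto intro: continuous_on_subset)
next
  case (Suc n)
  from Suc.prems(1) obtain f' where "\<And>x. x \<in> S \<Longrightarrow> (f has_derivative f' x) (at x)"
    and "\<And>v. Cn_on n S (\<lambda>x. f' x v)" by (elim Cn_on_SucE) blast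
  with Suc.IH Suc.prems(2) show ?case by (intro Cn_on_SucI) auto
qed

lemma Cn_on_const: "Cn_on n S (\<lambda>x. c)"
proof (induction n arbitrary: c)
  case (Suc n)
  show ?case by (rule Cn_on_SucI[where f' = "\<lambda>x v. 0"]) (simp_all add: Suc.IH)
qed simp

lemma Cn_on_add: "Cn_on n S f \<Longrightarrow> Cn_on n S g \<Longrightarrow> Cn_on n S (\<lambda>x. f x + g x)"
proof (induction n arbitrary: f g)
  case 0
  then show ?case by (auto intro: continuous_on_add)
next
  case (Suc n)
  from Suc.prems(1) obtain f' where "\<And>x. x \<in> S \<Longrightarrow> (f has_derivative f' x) (at x)"
    and "\<And>v. Cn_on n S (\<lambda>x. f' x v)" by (elim Cn_on_SucE) blast
  moreover from Suc.prems(2) obtain g' where "\<And>x. x \<in> S \<Longrightarrow> (g has_derivative g' x) (at x)"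
    and "\<And>v. Cn_on n S (\<lambda>x. g' x v)" by (elim Cn_on_SucE) blast
  ultimately show ?case
    by (intro Cn_on_SucI[where f' = "\<lambda>x v. f' x v + g' x v"] has_derivative_add Suc.IH)
qed

lemma Cn_on_bounded_linear:
  assumes L: "bounded_linear L"
  shows "Cn_on n S f \<Longrightarrow> Cn_on n S (\<lambda>x. L (f x))"
proof (induction n arbitrary: f)
  case 0
  then show ?case
    using L by (auto intro: continuous_on_compose2[of UNIV L] linear_continuous_on)
next
  case (Suc n)
  from Suc.prems obtain f' where d: "\<And>x. x \<in> S \<Longrightarrow> (f has_derivative f' x) (at x)"
    and c: "\<And>v. Cn_on n S (\<lambda>x. f' x v)" by (elim Cn_on_SucE) blast
  show ?case
    by (rule Cn_on_SucI[where f' = "\<lambda>x v. L (f' x v)"])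
      (use bounded_linear.has_derivative[OF L d] Suc.IH[OF c] in auto)
qed

lemma Cn_on_scaleR:
  "Cn_on n S a \<Longrightarrow> Cn_on n S f \<Longrightarrow> Cn_on n S (\<lambda>x. a x *\<^sub>R f x)"
proof (induction n arbitrary: a f)
  case 0
  then show ?case by (auto intro: continuous_on_scaleR)
next
  case (Suc n)
  from Suc.prems(1) obtain a' where da: "\<And>x. x \<in> S \<Longrightarrow> (a has_derivative a' x) (at x)"
    and ca: "\<And>v. Cn_on n S (\<lambda>x. a' x v)" by (elim Cn_on_SucE) blast
  from Suc.prems(2) obtain f' where df: "\<And>x. x \<in> S \<Longrightarrow> (f has_derivative f' x) (at x)"
    and cf: "\<And>v. Cn_on n S (\<lambda>x. f' x v)" by (elim Cn_on_SucE) blast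
  have "Cn_on n S a" "Cn_on n S f"
    using Suc.prems by (simp_all add: Cn_on_Suc_imp)
  then show ?case
    by (intro Cn_on_SucI[where f' = "\<lambda>x v. a x *\<^sub>R f' x v + a' x v *\<^sub>R f x"]
        has_derivative_scaleR[OF da df] Cn_on_add Suc.IH ca cf)
qed

lemma Cn_on_sum:
  "finite A \<Longrightarrow> (\<And>i. i \<in> A \<Longrightarrow> Cn_on n S (f i)) \<Longrightarrow> Cn_on n S (\<lambda>x. \<Sum>i\<in>A. f i x)"
  by (induction A rule: finite_induct) (simp_all add: Cn_on_const Cn_on_add)

lemma Cn_on_compose:
  fixes h :: "'b::euclidean_space \<Rightarrow> 'c::euclidean_space" and g :: "'a::euclidean_space \<Rightarrow> 'b"
  shows "Cn_on n T h \<Longrightarrow> Cn_on n S g \<Longrightarrow> g ` S \<subseteq> T \<Longrightarrow> Cn_on n S (\<lambda>x. h (g x))"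
proof (induction n arbitrary: h g)
  case 0
  then show ?case by (auto intro: continuous_on_compose2)
next
  case (Suc n)
  from Suc.prems(1) obtain h' where dh: "\<And>y. y \<in> T \<Longrightarrow> (h has_derivative h' y) (at y)"
    and ch: "\<And>v. Cn_on n T (\<lambda>y. h' y v)" by (elim Cn_on_SucE) blast
  from Suc.prems(2) obtain g' where dg: "\<And>x. x \<in> S \<Longrightarrow> (g has_derivative g' x) (at x)"
    and cg: "\<And>v. Cn_on n S (\<lambda>x. g' x v)" by (elim Cn_on_SucE) blast
  \<comment> \<open>Expanding \<open>g' x v\<close> in the basis turns \<open>h' (g x) (g' x v)\<close> into a sum of products
    of \<open>C\<^sup>n\<close> functions.\<close>
  define D where "D x v = (\<Sum>b\<in>Basis. (g' x v \<bullet> b) *\<^sub>R h' (g x) b)" for x v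
  have "((\<lambda>x. h (g x)) has_derivative D x) (at x)" if "x \<in> S" for x
  proof -
    have gx: "g x \<in> T" using that Suc.prems(3) by auto
    have lin: "linear (h' (g x))" using dh[OF gx] by (rule has_derivative_linear)
    have "h' (g x) (g' x v) = D x v" for v
    proof -
      have "h' (g x) (g' x v) = h' (g x) (\<Sum>b\<in>Basis. (g' x v \<bullet> b) *\<^sub>R b)"
        by (simp add: euclidean_representation)
      also have "\<dots> = D x v"
        by (simp add: D_def linear_sum[OF lin] linear_scale[OF lin])
      finally show ?thesis .
    qed
    then show ?thesis
      using diff_chain_at[OF dg[OF that] dh[OF gx]] by (simp add: o_def)
  qed
  moreover have "Cn_on n S (\<lambda>x. D x v)" for v
  proof -
    have "Cn_on n S (\<lambda>x. h' (g x) b)" for b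
      using Suc.IH[OF ch Cn_on_Suc_imp[OF Suc.prems(2)] Suc.prems(3)] .
    then show ?thesis
      unfolding D_def
      by (intro Cn_on_sum Cn_on_scaleR Cn_on_bounded_linear[OF bounded_linear_inner_left cg]) auto
  qed
  ultimately show ?case by (rule Cn_on_SucI)
qed

lemma Cn_on_inverse:
  fixes a :: "'a::euclidean_space \<Rightarrow> real"
  shows "Cn_on n S a \<Longrightarrow> (\<And>x. x \<in> S \<Longrightarrow> a x \<noteq> 0) \<Longrightarrow> Cn_on n S (\<lambda>x. inverse (a x))"
proof (induction n arbitrary: a)
  case 0
  then show ?case by (auto intro: continuous_on_inverse)
next
  case (Suc n)
  from Suc.prems(1) obtain a' where da: "\<And>x. x \<in> S \<Longrightarrow> (a has_derivative a' x) (at x)"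
    and ca: "\<And>v. Cn_on n S (\<lambda>x. a' x v)" by (elim Cn_on_SucE) blast
  have inv: "Cn_on n S (\<lambda>x. inverse (a x))"
    using Suc.IH[OF Cn_on_Suc_imp[OF Suc.prems(1)] Suc.prems(2)] .
  have "Cn_on n S (\<lambda>x. - (inverse (a x) * a' x v * inverse (a x)))" for v
    using Cn_on_scaleR[OF Cn_on_scaleR[OF inv ca] inv, of v]
    by (intro Cn_on_bounded_linear[OF bounded_linear_minus[OF bounded_linear_ident]]) simp
  with da Suc.prems(2) show ?case
    by (intro Cn_on_SucI[where f' = "\<lambda>x v. - (inverse (a x) * a' x v * inverse (a x))"]
        Deriv.has_derivative_inverse)
qed

lemma smooth_on_Cn_on: "smooth_on S f \<Longrightarrow> Cn_on n S f"
  unfolding smooth_on_def by blast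

lemma smooth_on_continuous_on: "smooth_on S f \<Longrightarrow> continuous_on S f"
  using smooth_on_Cn_on[of S f 0] by simp

lemma smooth_on_subset: "smooth_on S f \<Longrightarrow> T \<subseteq> S \<Longrightarrow> smooth_on T f"
  unfolding smooth_on_def by (blast intro: Cn_on_subset)

lemma smooth_on_const: "smooth_on S (\<lambda>x. c)"
  unfolding smooth_on_def by (blast intro: Cn_on_const)

lemma smooth_on_add: "smooth_on S f \<Longrightarrow> smooth_on S g \<Longrightarrow> smooth_on S (\<lambda>x. f x + g x)"
  unfolding smooth_on_def by (blast intro: Cn_on_add)

lemma smooth_on_bounded_linear:
  "bounded_linear L \<Longrightarrow> smooth_on S f \<Longrightarrow> smooth_on S (\<lambda>x. L (f x))"
  unfolding smooth_on_def by (blast intro: Cn_on_bounded_linear)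

lemma smooth_on_scaleR: "smooth_on S a \<Longrightarrow> smooth_on S f \<Longrightarrow> smooth_on S (\<lambda>x. a x *\<^sub>R f x)"
  unfolding smooth_on_def by (blast intro: Cn_on_scaleR)

lemma smooth_on_mult:
  fixes a b :: "'a::euclidean_space \<Rightarrow> real"
  shows "smooth_on S a \<Longrightarrow> smooth_on S b \<Longrightarrow> smooth_on S (\<lambda>x. a x * b x)"
  using smooth_on_scaleR[of S a b] by simp

lemma smooth_on_compose:
  fixes h :: "'b::euclidean_space \<Rightarrow> 'c::euclidean_space" and g :: "'a::euclidean_space \<Rightarrow> 'b"
  shows "smooth_on T h \<Longrightarrow> smooth_on S g \<Longrightarrow> g ` S \<subseteq> T \<Longrightarrow> smooth_on S (\<lambda>x. h (g x))"
  unfolding smooth_on_def by (blast intro: Cn_on_compose)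

lemma smooth_on_inverse:
  fixes a :: "'a::euclidean_space \<Rightarrow> real"
  shows "smooth_on S a \<Longrightarrow> (\<And>x. x \<in> S \<Longrightarrow> a x \<noteq> 0) \<Longrightarrow> smooth_on S (\<lambda>x. inverse (a x))"
  unfolding smooth_on_def by (blast intro: Cn_on_inverse)

lemma smooth_on_minus: "smooth_on S f \<Longrightarrow> smooth_on S (\<lambda>x. - f x)"
  using smooth_on_bounded_linear[OF bounded_linear_minus[OF bounded_linear_ident]] .

lemma smooth_on_diff: "smooth_on S f \<Longrightarrow> smooth_on S g \<Longrightarrow> smooth_on S (\<lambda>x. f x - g x)"
  using smooth_on_add[of S f "\<lambda>x. - g x"] smooth_on_minus by auto

lemma smooth_on_divide:
  fixes a b :: "'a::euclidean_space \<Rightarrow> real"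
  shows "smooth_on S a \<Longrightarrow> smooth_on S b \<Longrightarrow> (\<And>x. x \<in> S \<Longrightarrow> b x \<noteq> 0) \<Longrightarrow>
    smooth_on S (\<lambda>x. a x / b x)"
  unfolding divide_inverse by (intro smooth_on_mult smooth_on_inverse)

lemma smooth_on_power:
  fixes a :: "'a::euclidean_space \<Rightarrow> real"
  shows "smooth_on S a \<Longrightarrow> smooth_on S (\<lambda>x. a x ^ n)"
  by (induction n) (simp_all add: smooth_on_const smooth_on_mult)

lemma smooth_on_fst: "smooth_on S f \<Longrightarrow> smooth_on S (\<lambda>x. fst (f x))"
  by (rule smooth_on_bounded_linear[OF bounded_linear_fst])

lemma smooth_on_snd: "smooth_on S f \<Longrightarrow> smooth_on S (\<lambda>x. snd (f x))"
  by (rule smooth_on_bounded_linear[OF bounded_linear_snd])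

lemma smooth_on_Pair: "smooth_on S f \<Longrightarrow> smooth_on S g \<Longrightarrow> smooth_on S (\<lambda>x. (f x, g x))"
  using smooth_on_add[OF
      smooth_on_bounded_linear[OF bounded_linear_Pair[OF bounded_linear_ident bounded_linear_zero]]
      smooth_on_bounded_linear[OF bounded_linear_Pair[OF bounded_linear_zero bounded_linear_ident]]]
  by simp

lemma smooth_onI_has_derivative:
  assumes "\<And>x. x \<in> S \<Longrightarrow> (f has_derivative f' x) (at x)"
    and "\<And>v. smooth_on S (\<lambda>x. f' x v)"
  shows "smooth_on S f"
  unfolding smooth_on_def
proof
  fix n show "Cn_on n S f"
  proof (cases n)
    case 0
    then show ?thesis
      using assms(1) by (auto intro!: continuous_at_imp_continuous_on has_derivative_continuous)
  next
    case (Suc m)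
    then show ?thesis
      using assms by (auto intro: Cn_on_SucI smooth_on_Cn_on)
  qed
qed

lemma smooth_on_id: "smooth_on S (\<lambda>x. x)"
  by (rule smooth_onI_has_derivative[where f' = "\<lambda>x v. v"]) (auto intro: smooth_on_const)

lemma diffeo_between_inverse:
  assumes "diffeo_between U V \<phi>"
  obtains \<psi> where "diffeo_between V U \<psi>" "\<And>x. x \<in> U \<Longrightarrow> \<psi> (\<phi> x) = x"
  using assms unfolding diffeo_between_def by metis

lemma diffeo_between_compose:
  assumes "diffeo_between U V \<phi>" and "diffeo_between V W \<eta>"
  shows "diffeo_between U W (\<lambda>x. \<eta> (\<phi> x))"
proof -
  obtain \<phi>' where \<phi>: "open U" "open V" "smooth_on U \<phi>" "\<phi> ` U = V" "smooth_on V \<phi>'"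
    "\<phi>' ` V = U" "\<forall>x\<in>U. \<phi>' (\<phi> x) = x" "\<forall>y\<in>V. \<phi> (\<phi>' y) = y"
    using assms(1) unfolding diffeo_between_def by blast
  obtain \<eta>' where \<eta>: "open W" "smooth_on V \<eta>" "\<eta> ` V = W" "smooth_on W \<eta>'"
    "\<eta>' ` W = V" "\<forall>x\<in>V. \<eta>' (\<eta> x) = x" "\<forall>y\<in>W. \<eta> (\<eta>' y) = y"
    using assms(2) unfolding diffeo_between_def by blast
  show ?thesis
    unfolding diffeo_between_def
  proof (intro conjI exI[of _ "\<lambda>z. \<phi>' (\<eta>' z)"] ballI)
    show "smooth_on U (\<lambda>x. \<eta> (\<phi> x))"
      using \<phi>(3,4) \<eta>(2) by (blast intro: smooth_on_compose)
    show "smooth_on W (\<lambda>z. \<phi>' (\<eta>' z))"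
      using \<phi>(5) \<eta>(4,5) by (blast intro: smooth_on_compose)
    show "(\<lambda>x. \<eta> (\<phi> x)) ` U = W" "(\<lambda>z. \<phi>' (\<eta>' z)) ` W = U"
      using \<phi>(4,6) \<eta>(3,5) by (simp_all flip: image_image)
  qed (use \<phi> \<eta> in auto)
qed

lemma diffeo_between_translation:
  fixes a :: "'a::euclidean_space"
  assumes "open U"
  shows "diffeo_between U ((\<lambda>x. x + a) ` U) (\<lambda>x. x + a)"
  unfolding diffeo_between_def
proof (intro conjI exI[of _ "\<lambda>y. y - a"] ballI)
  show "open ((\<lambda>x. x + a) ` U)"
    using open_translation[OF assms, of a] by (simp add: add.commute)
  show "smooth_on U (\<lambda>x. x + a)" "smooth_on ((\<lambda>x. x + a) ` U) (\<lambda>y. y - a)"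
    by (intro smooth_on_add smooth_on_diff smooth_on_id smooth_on_const)+
  show "(\<lambda>y. y - a) ` (\<lambda>x. x + a) ` U = U"
    by (simp add: image_image)
qed (use assms in auto)

lemma smooth_onI_autonomous_derivative:
  assumes "continuous_on V g" "g ` V \<subseteq> S"
    and "\<And>y. y \<in> V \<Longrightarrow> (g has_derivative L (g y)) (at y)"
    and "\<And>w. smooth_on S (\<lambda>x. L x w)"
  shows "smooth_on V g"
  unfolding smooth_on_def
proof
  fix n show "Cn_on n V g"
  proof (induction n)
    case 0
    then show ?case using assms(1) by simp
  next
    case (Suc n)
    have "Cn_on n V (\<lambda>y. L (g y) w)" for w
      using Cn_on_compose[OF smooth_on_Cn_on[OF assms(4)] Suc.IH assms(2)] .
    with assms(3) show ?case by (rule Cn_on_SucI)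
  qed
qed

lemma Blinfun_right_inverse_compose:
  fixes D L :: "'a::euclidean_space \<Rightarrow> 'a"
  assumes "bounded_linear D" "linear L" "\<And>w. D (L w) = w"
  shows "Blinfun L o\<^sub>L Blinfun D = id_blinfun"
proof -
  have "L \<circ> D = id"
    using linear_inverse_left[of D L] assms by (auto simp: bounded_linear.linear fun_eq_iff)
  then show ?thesis
    using assms(1,2)
    by (intro blinfun_eqI)
      (simp add: bounded_linear_Blinfun_apply linear_conv_bounded_linear fun_eq_iff)
qed

lemma smooth_local_diffeo:
  fixes T :: "'a::euclidean_space \<Rightarrow> 'a"
  assumes "open S" "x0 \<in> S"
    and deriv: "\<And>x. x \<in> S \<Longrightarrow> (T has_derivative D x) (at x)"
    and right_inverse: "\<And>x w. x \<in> S \<Longrightarrow> D x (L x w) = w"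
    and linear: "\<And>x. x \<in> S \<Longrightarrow> linear (L x)"
    and smooth_D: "\<And>w. smooth_on S (\<lambda>x. D x w)"
    and smooth_L: "\<And>w. smooth_on S (\<lambda>x. L x w)"
  obtains U V where "x0 \<in> U" "diffeo_between U V T"
proof -
  have bl: "bounded_linear (D x)" if "x \<in> S" for x
    using deriv[OF that] by (rule has_derivative_bounded_linear)
  have D_apply: "blinfun_apply (Blinfun (D x)) = D x" if "x \<in> S" for x
    using bl[OF that] by (rule bounded_linear_Blinfun_apply)
  have "continuous_on S (\<lambda>x. Blinfun (D x))"
    by (rule continuous_on_blinfun_componentwise)
      (simp add: D_apply cong: continuous_on_cong, rule smooth_on_continuous_on[OF smooth_D])
  moreover have "Blinfun (L x0) o\<^sub>L Blinfun (D x0) = id_blinfun"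
    using bl linear right_inverse \<open>x0 \<in> S\<close> by (blast intro: Blinfun_right_inverse_compose)
  moreover have "(T has_derivative blinfun_apply (Blinfun (D x))) (at x)" if "x \<in> S" for x
    using deriv[OF that] D_apply[OF that] by simp
  ultimately obtain U V g g' where U: "open U" "U \<subseteq> S" "x0 \<in> U" "open V"
    and hom: "homeomorphism U V T g"
    and g_deriv: "\<And>y. y \<in> V \<Longrightarrow> (g has_derivative g' y) (at y)"
    and g': "\<And>y. y \<in> V \<Longrightarrow> g' y = inv (blinfun_apply (Blinfun (D (g y))))"
    and bij: "\<And>y. y \<in> V \<Longrightarrow> bij (blinfun_apply (Blinfun (D (g y))))"
    using inverse_function_theorem[OF \<open>open S\<close> _ _ \<open>x0 \<in> S\<close>] by metis
  have gV: "g ` V = U" "\<And>y. y \<in> V \<Longrightarrow> T (g y) = y" "\<And>x. x \<in> U \<Longrightarrow> g (T x) = x"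
    "T ` U = V" "continuous_on V g"
    using hom unfolding homeomorphism_def by auto
  have g_deriv': "(g has_derivative L (g y)) (at y)" if "y \<in> V" for y
  proof -
    have "g y \<in> S" using gV(1) U(2) that by auto
    then have "g' y = L (g y)"
      using g'[OF that] bij[OF that] right_inverse D_apply by (auto simp: bij_is_inj inv_f_eq)
    with g_deriv[OF that] show ?thesis by simp
  qed
  have "smooth_on V g"
    by (rule smooth_onI_autonomous_derivative[OF gV(5) _ g_deriv' smooth_L])
      (use gV(1) U(2) in auto)
  moreover have "smooth_on U T"
    using smooth_onI_has_derivative[OF deriv smooth_D] U(2) by (rule smooth_on_subset)
  ultimately have "diffeo_between U V T"
    unfolding diffeo_between_def using U gV by blast
  with U(3) show ?thesis by (rule that)
qed

lemma A_equivalent_diffeo_compose_translation: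
  fixes g :: "'a::euclidean_space \<Rightarrow> 'b::euclidean_space"
  assumes "continuous_on UNIV g" and equivariant: "\<And>x. g (x + a) = g x + b"
    and \<Theta>: "diffeo_between U V \<Theta>" and "g p \<in> U"
  shows "A_equivalent (\<lambda>x. \<Theta> (g x)) p g (p + a)"
proof -
  obtain \<Theta>' where \<Theta>': "diffeo_between V U \<Theta>'" "\<And>y. y \<in> U \<Longrightarrow> \<Theta>' (\<Theta> y) = y"
    using diffeo_between_inverse[OF \<Theta>] by blast
  have "open U" "\<Theta> ` U = V" using \<Theta> by (simp_all add: diffeo_between_def)
  define U0 where "U0 = g -` U"
  have "open U0"
    unfolding U0_def using \<open>open U\<close> \<open>continuous_on UNIV g\<close>
    by (simp add: continuous_on_open_vimage)
  have "diffeo_between U0 ((\<lambda>x. x + a) ` U0) (\<lambda>x. x + a)"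
    using \<open>open U0\<close> by (rule diffeo_between_translation)
  moreover have "diffeo_between V ((\<lambda>y. y + b) ` U) (\<lambda>y. \<Theta>' y + b)"
    using diffeo_between_compose[OF \<Theta>'(1) diffeo_between_translation[OF \<open>open U\<close>]] .
  moreover have "\<forall>x\<in>U0. \<Theta> (g x) \<in> V \<and> \<Theta>' (\<Theta> (g x)) + b = g (x + a)"
    using \<Theta>'(2) \<open>\<Theta> ` U = V\<close> by (auto simp: U0_def equivariant)
  moreover have "p \<in> U0" using \<open>g p \<in> U\<close> by (simp add: U0_def)
  ultimately show ?thesis
    unfolding A_equivalent_def by blast
qed

lemma oint_fundamental_theorem:
  assumes "\<And>t. (F has_vector_derivative f t) (at t)"
  shows "oint a b f = F b - F a"
proof (cases "a \<le> b")
  case True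
  have "(f has_integral F b - F a) {a..b}"
    using True assms
    by (intro fundamental_theorem_of_calculus) (auto intro: has_vector_derivative_at_within)
  with True show ?thesis by (simp add: oint_def integral_unique)
next
  case False
  have "(f has_integral F a - F b) {b..a}"
    using False assms
    by (intro fundamental_theorem_of_calculus) (auto intro: has_vector_derivative_at_within)
  with False show ?thesis by (simp add: oint_def integral_unique)
qed

lemma oint_eq_integral_diff:
  assumes "c \<le> a" "c \<le> s" and "continuous_on {c..max a s} f"
  shows "oint a s f = integral {c..s} f - integral {c..a} f"
proof (cases "a \<le> s")
  case True
  then have "integral {c..a} f + integral {a..s} f = integral {c..s} f"
    using assms by (intro Henstock_Kurzweil_Integration.integral_combine integrable_continuous_real
        continuous_on_subset[OF assms(3)]) auto
  with True show ?thesis by (simp add: oint_def algebra_simps)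
next
  case False
  then have "integral {c..s} f + integral {s..a} f = integral {c..a} f"
    using assms by (intro Henstock_Kurzweil_Integration.integral_combine integrable_continuous_real
        continuous_on_subset[OF assms(3)]) auto
  with False show ?thesis by (simp add: oint_def algebra_simps)
qed

lemma open_interval_enlarge_Icc:
  fixes I :: "real set"
  assumes "open I" "is_interval I" "a \<in> I" "b \<in> I"
  obtains c d where "c < a" "b < d" "{c..d} \<subseteq> I"
proof -
  obtain e1 where "e1 > 0" "ball a e1 \<subseteq> I"
    using \<open>open I\<close> \<open>a \<in> I\<close> by (rule openE)
  obtain e2 where "e2 > 0" "ball b e2 \<subseteq> I"
    using \<open>open I\<close> \<open>b \<in> I\<close> by (rule openE)
  have lo: "a - e1 / 2 \<in> I" and hi: "b + e2 / 2 \<in> I"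
    using \<open>e1 > 0\<close> \<open>ball a e1 \<subseteq> I\<close> \<open>e2 > 0\<close> \<open>ball b e2 \<subseteq> I\<close>
    by (auto simp: dist_real_def subset_iff)
  have "{a - e1 / 2..b + e2 / 2} \<subseteq> I"
    using mem_is_interval_1_I[OF \<open>is_interval I\<close> lo hi] by auto
  with \<open>e1 > 0\<close> \<open>e2 > 0\<close> show ?thesis by (intro that) auto
qed

lemma has_vector_derivative_oint:
  fixes f :: "real \<Rightarrow> 'a::euclidean_space"
  assumes "open I" "is_interval I" "a \<in> I" "u \<in> I" and "continuous_on I f"
  shows "((\<lambda>s. oint a s f) has_vector_derivative f u) (at u)"
proof -
  have "min a u \<in> I" "max a u \<in> I" using assms by (simp_all add: min_def max_def)
  then obtain c d where "c < min a u" "max a u < d" "{c..d} \<subseteq> I"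
    by (rule open_interval_enlarge_Icc[OF \<open>open I\<close> \<open>is_interval I\<close>])
  then have cont: "continuous_on {c..d} f" and ineqs: "c < a" "c < u" "a < d" "u < d"
    using continuous_on_subset[OF \<open>continuous_on I f\<close>] by simp_all
  have "((\<lambda>s. integral {c..s} f) has_vector_derivative f u) (at u)"
    using integral_has_vector_derivative[OF cont, of u] ineqs by (simp add: at_within_Icc_at)
  then have deriv: "((\<lambda>s. integral {c..s} f - integral {c..a} f) has_vector_derivative f u) (at u)"
    using has_vector_derivative_diff[OF _ has_vector_derivative_const] by fastforce
  have eq: "integral {c..s} f - integral {c..a} f = oint a s f" if "s \<in> {c<..<d}" for s
    using that ineqs by (intro oint_eq_integral_diff[symmetric] continuous_on_subset[OF cont]) auto
  show ?thesis
    by (rule has_vector_derivative_transform_within_open[OF deriv, of "{c<..<d}"])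
      (use ineqs eq in auto)
qed

definition curve_plus_deriv ::
    "real \<times> real \<times> real \<Rightarrow> real \<Rightarrow> real \<Rightarrow> real \<Rightarrow> real \<times> real \<times> real \<Rightarrow> real \<times> real \<times> real" where
  "curve_plus_deriv g a b c w = fst w *\<^sub>R g + (a * fst (snd w), b * fst (snd w), c * snd (snd w))"

(* The Jacobian determinant of curve_plus_deriv g a b c is c * curve_plus_minor g a b. *)
definition curve_plus_minor :: "real \<times> real \<times> real \<Rightarrow> real \<Rightarrow> real \<Rightarrow> real" where
  "curve_plus_minor g a b = fst g * b - fst (snd g) * a"

definition curve_plus_deriv_inv ::
    "real \<times> real \<times> real \<Rightarrow> real \<Rightarrow> real \<Rightarrow> real \<Rightarrow> real \<times> real \<times> real \<Rightarrow> real \<times> real \<times> real" where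
  "curve_plus_deriv_inv g a b c w =
    ((fst w * b - fst (snd w) * a) / curve_plus_minor g a b,
     (fst g * fst (snd w) - fst (snd g) * fst w) / curve_plus_minor g a b,
     (snd (snd w) - (fst w * b - fst (snd w) * a) / curve_plus_minor g a b * snd (snd g)) / c)"

lemma curve_plus_deriv_inv:
  assumes "curve_plus_minor g a b \<noteq> 0" "c \<noteq> 0"
  shows "curve_plus_deriv g a b c (curve_plus_deriv_inv g a b c w) = w"
proof -
  obtain g1 g2 g3 where g: "g = (g1, g2, g3)" by (cases g)
  obtain x y z where w: "w = (x, y, z)" by (cases w)
  have minor: "curve_plus_minor (g1, g2, g3) a b = g1 * b - g2 * a"
    by (simp add: curve_plus_minor_def)
  show ?thesis
    using assms unfolding curve_plus_deriv_def curve_plus_deriv_inv_def g w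
    by (simp add: field_simps) (simp add: minor algebra_simps)
qed

lemma linear_curve_plus_deriv_inv: "linear (curve_plus_deriv_inv g a b c)"
  unfolding curve_plus_deriv_inv_def
  by (rule linearI) (simp_all add: add_divide_distrib diff_divide_distrib algebra_simps)

lemma has_derivative_curve_plus:
  assumes "(\<gamma> has_vector_derivative g) (at u)"
    and "(\<alpha> has_real_derivative a) (at q)" "(\<beta> has_real_derivative b) (at q)"
  shows "((\<lambda>(u, q, r). \<gamma> u + (\<alpha> q, \<beta> q, c * r)) has_derivative curve_plus_deriv g a b c) (at (u, q, r))"
proof -
  let ?x = "(u, q, r)"
  have "((\<lambda>x. \<gamma> (fst x)) has_derivative (\<lambda>w. fst w *\<^sub>R g)) (at ?x)"
    using assms(1)[unfolded has_vector_derivative_def]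
    by (rule has_derivative_compose[OF has_derivative_fst[OF has_derivative_ident], where x = ?x,
          simplified])
  moreover have "((\<lambda>x. \<alpha> (fst (snd x))) has_derivative (\<lambda>w. a * fst (snd w))) (at ?x)"
    using assms(2)[unfolded has_field_derivative_def]
    by (rule has_derivative_compose[OF has_derivative_fst[OF has_derivative_snd[OF has_derivative_ident]],
          where x = ?x, simplified])
  moreover have "((\<lambda>x. \<beta> (fst (snd x))) has_derivative (\<lambda>w. b * fst (snd w))) (at ?x)"
    using assms(3)[unfolded has_field_derivative_def]
    by (rule has_derivative_compose[OF has_derivative_fst[OF has_derivative_snd[OF has_derivative_ident]],
          where x = ?x, simplified])
  moreover have "((\<lambda>x. c * snd (snd x)) has_derivative (\<lambda>w. c * snd (snd w))) (at ?x)"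
    by (intro has_derivative_mult_right has_derivative_snd has_derivative_ident)
  moreover have "(\<lambda>(u, q, r). \<gamma> u + (\<alpha> q, \<beta> q, c * r)) =
      (\<lambda>x. \<gamma> (fst x) + (\<alpha> (fst (snd x)), \<beta> (fst (snd x)), c * snd (snd x)))"
    by auto
  ultimately show ?thesis
    unfolding curve_plus_deriv_def by (simp only:) (intro has_derivative_add has_derivative_Pair)
qed

context
  fixes S :: "'a::euclidean_space set" and g :: "'a \<Rightarrow> real \<times> real \<times> real" and a b :: "'a \<Rightarrow> real"
  assumes smooth: "smooth_on S g" "smooth_on S a" "smooth_on S b"
begin

lemma smooth_on_curve_plus_minor: "smooth_on S (\<lambda>x. curve_plus_minor (g x) (a x) (b x))"
  unfolding curve_plus_minor_def using smooth
  by (intro smooth_on_diff smooth_on_mult smooth_on_fst smooth_on_snd)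

lemma smooth_on_curve_plus_deriv: "smooth_on S (\<lambda>x. curve_plus_deriv (g x) (a x) (b x) c w)"
  unfolding curve_plus_deriv_def using smooth
  by (intro smooth_on_add smooth_on_scaleR smooth_on_Pair smooth_on_mult smooth_on_const)

lemma smooth_on_curve_plus_deriv_inv:
  assumes "\<And>x. x \<in> S \<Longrightarrow> curve_plus_minor (g x) (a x) (b x) \<noteq> 0" "c \<noteq> 0"
  shows "smooth_on S (\<lambda>x. curve_plus_deriv_inv (g x) (a x) (b x) c w)"
  unfolding curve_plus_deriv_inv_def using smooth smooth_on_curve_plus_minor assms
  by (intro smooth_on_Pair smooth_on_divide smooth_on_diff smooth_on_mult smooth_on_const
      smooth_on_fst smooth_on_snd) auto

end

lemma local_diffeo_curve_plus:
  fixes \<gamma> \<gamma>' :: "real \<Rightarrow> real \<times> real \<times> real" and \<alpha> \<alpha>' \<beta> \<beta>' :: "real \<Rightarrow> real"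
  assumes "open I" "u0 \<in> I"
    and \<gamma>: "\<And>u. u \<in> I \<Longrightarrow> (\<gamma> has_vector_derivative \<gamma>' u) (at u)" "smooth_on I \<gamma>'"
    and \<alpha>: "\<And>q. (\<alpha> has_real_derivative \<alpha>' q) (at q)" "smooth_on UNIV \<alpha>'"
    and \<beta>: "\<And>q. (\<beta> has_real_derivative \<beta>' q) (at q)" "smooth_on UNIV \<beta>'"
    and "c \<noteq> 0" and minor0: "curve_plus_minor (\<gamma>' u0) (\<alpha>' q0) (\<beta>' q0) \<noteq> 0"
  obtains U V where "(u0, q0, r0) \<in> U"
    "diffeo_between U V (\<lambda>(u, q, r). \<gamma> u + (\<alpha> q, \<beta> q, c * r))"
proof -
  define G where "G x = \<gamma>' (fst x)" for x :: "real \<times> real \<times> real"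
  define A where "A x = \<alpha>' (fst (snd x))" for x :: "real \<times> real \<times> real"
  define B where "B x = \<beta>' (fst (snd x))" for x :: "real \<times> real \<times> real"
  define S where "S = fst -` I \<inter> (\<lambda>x. curve_plus_minor (G x) (A x) (B x)) -` (- {0})"
  have "S \<subseteq> fst -` I" by (auto simp: S_def)
  have "smooth_on (fst -` I) G"
    unfolding G_def[abs_def]
    by (rule smooth_on_compose[OF \<gamma>(2)]) (auto intro: smooth_on_fst smooth_on_id)
  moreover have "smooth_on T (\<lambda>x. fst (snd x))" for T :: "(real \<times> real \<times> real) set"
    by (intro smooth_on_fst smooth_on_snd smooth_on_id)
  then have "smooth_on T A" "smooth_on T B" for T
    unfolding A_def[abs_def] B_def[abs_def]
    by (auto intro: smooth_on_compose[OF \<alpha>(2)] smooth_on_compose[OF \<beta>(2)])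
  ultimately have "continuous_on (fst -` I) (\<lambda>x. curve_plus_minor (G x) (A x) (B x))"
    and smooth: "smooth_on S G" "smooth_on S A" "smooth_on S B"
    using smooth_on_subset[OF _ \<open>S \<subseteq> fst -` I\<close>]
    by (blast intro: smooth_on_continuous_on smooth_on_curve_plus_minor)+
  then have "open S"
    unfolding S_def using \<open>open I\<close> by (intro continuous_open_preimage) (auto simp: open_vimage_fst)
  have "(u0, q0, r0) \<in> S"
    using \<open>u0 \<in> I\<close> minor0 by (simp add: S_def G_def A_def B_def)
  have deriv: "((\<lambda>(u, q, r). \<gamma> u + (\<alpha> q, \<beta> q, c * r)) has_derivative
      curve_plus_deriv (G x) (A x) (B x) c) (at x)" if "x \<in> S" for x
    using that \<gamma>(1) \<alpha>(1) \<beta>(1)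
    by (cases x) (simp add: S_def G_def A_def B_def has_derivative_curve_plus)
  have minor: "curve_plus_minor (G x) (A x) (B x) \<noteq> 0" if "x \<in> S" for x
    using that by (simp add: S_def)
  have "curve_plus_deriv (G x) (A x) (B x) c (curve_plus_deriv_inv (G x) (A x) (B x) c w) = w"
    if "x \<in> S" for x w
    using minor[OF that] \<open>c \<noteq> 0\<close> by (rule curve_plus_deriv_inv)
  from smooth_local_diffeo[OF \<open>open S\<close> \<open>(u0, q0, r0) \<in> S\<close> deriv this linear_curve_plus_deriv_inv
      smooth_on_curve_plus_deriv[OF smooth] smooth_on_curve_plus_deriv_inv[OF smooth minor \<open>c \<noteq> 0\<close>]]
  show ?thesis using that by blast
qed

lemma oint_cusp_data:
  fixes v :: real
  assumes "k \<ge> 1"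
  shows "(1/2) *\<^sub>R oint 0 v (\<lambda>t. t *\<^sub>R (1 + (t ^ (2*k-1))\<^sup>2, 1 - (t ^ (2*k-1))\<^sup>2, - 2 * t ^ (2*k-1)))
    = (v\<^sup>2/4 + (v\<^sup>2)^(2*k)/(8 * real k), v\<^sup>2/4 - (v\<^sup>2)^(2*k)/(8 * real k),
       - (v^(2*k+1) / (2 * real k + 1)))"
proof -
  define F where "F t = (t^2 / real 2 + t^(4*k) / real (4*k), t^2 / real 2 - t^(4*k) / real (4*k),
      -2 * (t^(2*k+1) / real (2*k+1)))" for t :: real
  have power: "((\<lambda>t. t^n / real n) has_real_derivative t^(n-1)) (at t)" if "n > 0" for n and t :: real
    using DERIV_cdivide[OF DERIV_pow[of n t], of "real n"] that by simp
  have "((\<lambda>t. t^2 / real 2 + t^(4*k) / real (4*k)) has_real_derivative t^(2-1) + t^(4*k-1)) (at t)"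
    "((\<lambda>t. t^2 / real 2 - t^(4*k) / real (4*k)) has_real_derivative t^(2-1) - t^(4*k-1)) (at t)"
    "((\<lambda>t. -2 * (t^(2*k+1) / real (2*k+1))) has_real_derivative -2 * t^(2*k+1-1)) (at t)" for t :: real
    using assms by (intro DERIV_add DERIV_diff DERIV_cmult power; simp)+
  then have F_deriv: "(F has_vector_derivative
      (t^(2-1) + t^(4*k-1), t^(2-1) - t^(4*k-1), -2 * t^(2*k+1-1))) (at t)" for t
    unfolding F_def has_real_derivative_iff_has_vector_derivative by (intro has_vector_derivative_Pair)
  have integrand: "t *\<^sub>R (1 + (t ^ (2*k-1))\<^sup>2, 1 - (t ^ (2*k-1))\<^sup>2, - 2 * t ^ (2*k-1)) =
      (t^(2-1) + t^(4*k-1), t^(2-1) - t^(4*k-1), -2 * t^(2*k+1-1))" for t :: real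
  proof -
    have "Suc ((2*k-1) * 2) = 4*k-1" "Suc (2*k-1) = 2*k+1-1" using assms by simp_all
    then have "t * (t ^ (2*k-1))\<^sup>2 = t^(4*k-1)" "t * t ^ (2*k-1) = t^(2*k+1-1)"
      by (simp_all only: flip: power_mult power_Suc)
    then show ?thesis by (simp add: algebra_simps)
  qed
  have "oint 0 v (\<lambda>t. t *\<^sub>R (1 + (t ^ (2*k-1))\<^sup>2, 1 - (t ^ (2*k-1))\<^sup>2, - 2 * t ^ (2*k-1))) =
      F v - F 0"
    unfolding integrand by (rule oint_fundamental_theorem[OF F_deriv])
  moreover have "F 0 = 0"
    using assms by (simp add: F_def zero_prod_def)
  moreover have "(v\<^sup>2)^(2*k) = v^(4*k)"
    by (simp flip: power_mult)
  ultimately show ?thesis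
    using assms by (simp add: F_def field_simps)
qed

definition cusp_chart ::
    "nat \<Rightarrow> (real \<Rightarrow> real) \<Rightarrow> (real \<Rightarrow> real) \<Rightarrow> real \<times> real \<times> real \<Rightarrow> real \<times> real \<times> real"
  where "cusp_chart k g1 w1 = (\<lambda>(u, q, r).
    (1/2) *\<^sub>R oint 0 u (\<lambda>s. w1 s *\<^sub>R (- 1 - (g1 s)\<^sup>2, 1 - (g1 s)\<^sup>2, 2 * g1 s))
    + (q/4 + q^(2*k)/(8 * real k), q/4 - q^(2*k)/(8 * real k), - (r / (2 * real k + 1))))"

lemma wsurf_eq_cusp_chart_cuspidal_edge:
  assumes "k \<ge> 1"
  shows "wsurf g1 w1 (\<lambda>v. v ^ (2 * k - 1)) (\<lambda>v. v) = (\<lambda>x. cusp_chart k g1 w1 (cuspidal_edge k x))"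
proof
  fix x :: "real \<times> real"
  show "wsurf g1 w1 (\<lambda>v. v ^ (2 * k - 1)) (\<lambda>v. v) x = cusp_chart k g1 w1 (cuspidal_edge k x)"
    by (cases x)
      (simp only: wsurf_def cusp_chart_def cuspidal_edge_def case_prod_conv oint_cusp_data[OF assms])
qed

lemma cusp_chart_local_diffeo:
  assumes "k \<ge> 1" "open I" "is_interval I" "0 \<in> I" "smooth_on I g1" "smooth_on I w1"
    and "u0 \<in> I" "w1 u0 \<noteq> 0"
  obtains U V where "(u0, 0, 0) \<in> U" "diffeo_between U V (cusp_chart k g1 w1)"
proof -
  define h where "h s = w1 s *\<^sub>R (- 1 - (g1 s)\<^sup>2, 1 - (g1 s)\<^sup>2, 2 * g1 s)" for s
  define \<gamma> where "\<gamma> u = (1/2) *\<^sub>R oint 0 u h" for u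
  define \<alpha> where "\<alpha> q = q / 4 + q ^ (2 * k) / (8 * real k)" for q :: real
  define \<beta> where "\<beta> q = q / 4 - q ^ (2 * k) / (8 * real k)" for q :: real
  define \<alpha>' where "\<alpha>' q = 1 / 4 + q ^ (2 * k - 1) / 4" for q :: real
  define \<beta>' where "\<beta>' q = 1 / 4 - q ^ (2 * k - 1) / 4" for q :: real
  have smooth_h: "smooth_on I h"
    unfolding h_def using assms(5,6)
    by (intro smooth_on_scaleR smooth_on_Pair smooth_on_diff smooth_on_add smooth_on_mult
        smooth_on_power smooth_on_const)
  have \<gamma>: "(\<gamma> has_vector_derivative (1/2) *\<^sub>R h u) (at u)" if "u \<in> I" for u
    unfolding \<gamma>_def
    using has_vector_derivative_oint[OF assms(2-4) that smooth_on_continuous_on[OF smooth_h]]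
    by (rule bounded_linear.has_vector_derivative[OF bounded_linear_scaleR_right])
  have \<gamma>': "smooth_on I (\<lambda>u. (1/2) *\<^sub>R h u)"
    using smooth_h by (intro smooth_on_scaleR smooth_on_const)
  have \<alpha>\<beta>: "(\<alpha> has_real_derivative \<alpha>' q) (at q)" "(\<beta> has_real_derivative \<beta>' q) (at q)" for q
    unfolding \<alpha>_def[abs_def] \<beta>_def[abs_def] \<alpha>'_def \<beta>'_def using assms(1)
    by (auto intro!: derivative_eq_intros simp: field_simps)
  have \<alpha>'\<beta>': "smooth_on UNIV \<alpha>'" "smooth_on UNIV \<beta>'"
    unfolding \<alpha>'_def[abs_def] \<beta>'_def[abs_def]
    by (intro smooth_on_add smooth_on_diff smooth_on_divide smooth_on_power smooth_on_id
        smooth_on_const; simp)+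
  have "curve_plus_minor ((1/2) *\<^sub>R h u0) (\<alpha>' 0) (\<beta>' 0) = - w1 u0 / 4"
    using assms(1) by (simp add: curve_plus_minor_def h_def \<alpha>'_def \<beta>'_def algebra_simps)
  with assms(8) have "curve_plus_minor ((1/2) *\<^sub>R h u0) (\<alpha>' 0) (\<beta>' 0) \<noteq> 0"
    by simp
  moreover have "cusp_chart k g1 w1 = (\<lambda>(u, q, r). \<gamma> u + (\<alpha> q, \<beta> q, (- 1 / (2 * real k + 1)) * r))"
    by (auto simp: cusp_chart_def \<gamma>_def h_def[abs_def] \<alpha>_def \<beta>_def)
  ultimately show ?thesis
    using local_diffeo_curve_plus[OF assms(2,7) \<gamma> \<gamma>' \<alpha>\<beta>(1) \<alpha>'\<beta>'(1) \<alpha>\<beta>(2) \<alpha>'\<beta>'(2),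
        of "- 1 / (2 * real k + 1)"]
      that by auto
qed

lemma wsurf_A_equivalent_cuspidal_edge:
  assumes "k \<ge> 1" "open I" "is_interval I" "0 \<in> I" "smooth_on I g1" "smooth_on I w1"
    and "u0 \<in> I" "w1 u0 \<noteq> 0"
  shows "A_equivalent (wsurf g1 w1 (\<lambda>v. v ^ (2 * k - 1)) (\<lambda>v. v)) (u0, 0) (cuspidal_edge k) (0, 0)"
proof -
  obtain U V where "cuspidal_edge k (u0, 0) \<in> U" and "diffeo_between U V (cusp_chart k g1 w1)"
    using cusp_chart_local_diffeo[OF assms] by (auto simp: cuspidal_edge_def)
  moreover have "continuous_on UNIV (cuspidal_edge k)"
    unfolding cuspidal_edge_def case_prod_beta by (intro continuous_intros)
  moreover have "cuspidal_edge k (x + (- u0, 0)) = cuspidal_edge k x + (- u0, 0, 0)" for x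
    by (cases x) (simp add: cuspidal_edge_def)
  ultimately have "A_equivalent (\<lambda>x. cusp_chart k g1 w1 (cuspidal_edge k x)) (u0, 0)
      (cuspidal_edge k) ((u0, 0) + (- u0, 0))"
    by (intro A_equivalent_diffeo_compose_translation)
  then show ?thesis
    unfolding wsurf_eq_cusp_chart_cuspidal_edge[OF assms(1)] by simp
qed

theorem proposition4p7:
  fixes k :: nat and g1 w1 :: "real \<Rightarrow> real" and I :: "real set"
  assumes "k \<ge> 1"
    and "open I" and "is_interval I" and "0 \<in> I"
    and "smooth_on I g1" and "smooth_on I w1"
    and "w1 0 \<noteq> 0"
  shows "(\<forall>u0\<in>I. w1 u0 \<noteq> 0 \<longrightarrow>
            A_equivalent (wsurf g1 w1 (\<lambda>v. v ^ (2 * k - 1)) (\<lambda>v. v)) (u0, 0)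
                         (cuspidal_edge k) (0, 0))
       \<and> (\<exists>e>0. \<forall>u0. \<bar>u0\<bar> < e \<longrightarrow> u0 \<in> I \<and>
            A_equivalent (wsurf g1 w1 (\<lambda>v. v ^ (2 * k - 1)) (\<lambda>v. v)) (u0, 0)
                         (cuspidal_edge k) (0, 0))"
proof -
  have at_point: "\<forall>u0\<in>I. w1 u0 \<noteq> 0 \<longrightarrow>
      A_equivalent (wsurf g1 w1 (\<lambda>v. v ^ (2 * k - 1)) (\<lambda>v. v)) (u0, 0) (cuspidal_edge k) (0, 0)"
    using wsurf_A_equivalent_cuspidal_edge[OF assms(1-6)] by blast
  have "open (I \<inter> w1 -` (- {0}))"
    using smooth_on_continuous_on[OF assms(6)] assms(2)
    by (rule continuous_open_preimage) (simp add: open_Compl)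
  moreover have "0 \<in> I \<inter> w1 -` (- {0})"
    using assms(4,7) by simp
  ultimately obtain e where "e > 0" "ball 0 e \<subseteq> I \<inter> w1 -` (- {0})"
    by (rule openE)
  then have "\<forall>u0. \<bar>u0\<bar> < e \<longrightarrow> u0 \<in> I \<and> w1 u0 \<noteq> 0"
    by (auto simp: subset_iff dist_real_def)
  with at_point \<open>e > 0\<close> show ?thesis by blast
qed

end
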